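(* Let $m, n$ be positive integers with $m \mid n$, let $N < 2^n$ be a positive integer, and let $x < 2^m$ be an odd positive integer. Let $x_{\mathrm{minv}}$ be the inverse of $x$ modulo $2^m$. Define $z_0 = 0$ and, for $j = 0, 1, \ldots, \frac{n-2m}{m}$: $N_j = \lfloor N/2^{jm}\rfloor \bmod 2^m$; $\mathsf{ctrl}_j = \big[x_{\mathrm{minv}}\,(N_j - z_j)\big] \bmod 2^m \in [0, 2^m-1]$; $z'_j = z_j + \mathsf{ctrl}_j \cdot x$; and $z_{j+1} = \lfloor z'_j / 2^m\rfloor$. Then $0 \le z_j < x$ for all $j = 0, 1, \ldots, \frac{n-m}{m}$; $0 \le z'_j < 2^{2m}$ for all $j = 0, 1, \ldots, \frac{n-2m}{m}$; and $\mathsf{ctrl}_j = \lfloor z'_j / x\rfloor$ for all $j = 0, 1, \ldots, \frac{n-2m}{m}$. *)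

theory Defs
  imports "HOL-Number_Theory.Cong"
begin

definition Ndig :: "nat \<Rightarrow> int \<Rightarrow> nat \<Rightarrow> int" where
  "Ndig m N j = (N div 2 ^ (j * m)) mod 2 ^ m"

fun zseq :: "nat \<Rightarrow> int \<Rightarrow> int \<Rightarrow> int \<Rightarrow> nat \<Rightarrow> int" where
  "zseq m N x xminv 0 = 0"
| "zseq m N x xminv (Suc j) =
     (let z = zseq m N x xminv j;
          c = (xminv * (Ndig m N j - z)) mod 2 ^ m
      in (z + c * x) div 2 ^ m)"

definition ctrl :: "nat \<Rightarrow> int \<Rightarrow> int \<Rightarrow> int \<Rightarrow> nat \<Rightarrow> int" where
  "ctrl m N x xminv j = (xminv * (Ndig m N j - zseq m N x xminv j)) mod 2 ^ m"

definition zprime :: "nat \<Rightarrow> int \<Rightarrow> int \<Rightarrow> int \<Rightarrow> nat \<Rightarrow> int" where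
  "zprime m N x xminv j = zseq m N x xminv j + ctrl m N x xminv j * x"

end

theory Submission
  imports Defs
begin

text \<open>Only \<open>0 \<le> ctrl\<^sub>j < 2\<^sup>m\<close> and \<open>0 < x < 2\<^sup>m\<close> matter: if \<open>0 \<le> z\<^sub>j < x\<close> then
  \<open>z'\<^sub>j = z\<^sub>j + ctrl\<^sub>j x < x + (2\<^sup>m - 1) x = 2\<^sup>m x \<le> 2\<^sup>2\<^sup>m\<close>, so \<open>z\<^sub>j\<^sub>+\<^sub>1 = z'\<^sub>j div 2\<^sup>m < x\<close>,
  and \<open>z'\<^sub>j div x = ctrl\<^sub>j\<close> because \<open>z\<^sub>j\<close> is a remainder modulo \<open>x\<close>.\<close>

lemma add_mult_less_mult:
  fixes z c x b :: int
  assumes "0 \<le> z" and "z < x" and "c < b"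
  shows "z + c * x < b * x"
proof -
  have "z + c * x < (c + 1) * x"
    using assms(2) by (simp add: algebra_simps)
  also have "\<dots> \<le> b * x"
    using assms by (intro mult_right_mono) auto
  finally show ?thesis .
qed

lemma int_div_less_of_less_mult:
  fixes a b c :: int
  assumes "0 < b" and "a < c * b"
  shows "a div b < c"
proof (rule ccontr)
  assume "\<not> a div b < c"
  then have "c * b \<le> a div b * b"
    using assms(1) by (simp add: mult_right_mono)
  also have "\<dots> \<le> a"
    using assms(1) by (simp add: minus_mod_eq_div_mult [symmetric])
  finally show False
    using assms(2) by simp
qed

lemma ctrl_nonneg: "0 \<le> ctrl m N x xminv j"
  by (simp add: ctrl_def)

lemma ctrl_less: "ctrl m N x xminv j < 2 ^ m"
  by (simp add: ctrl_def)

lemma zseq_Suc_eq_zprime_div: "zseq m N x xminv (Suc j) = zprime m N x xminv j div 2 ^ m"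
  by (simp add: zprime_def ctrl_def Let_def)

lemma zseq_bounds:
  assumes "0 < x"
  shows "0 \<le> zseq m N x xminv j \<and> zseq m N x xminv j < x"
proof (induction j)
  case 0
  then show ?case
    using assms by simp
next
  case (Suc j)
  have "0 \<le> zprime m N x xminv j"
    using Suc assms ctrl_nonneg[of m N x xminv j] by (simp add: zprime_def)
  moreover have "zprime m N x xminv j < x * 2 ^ m"
    using Suc ctrl_less[of m N x xminv j] add_mult_less_mult
    by (simp add: zprime_def mult.commute)
  ultimately show ?case
    unfolding zseq_Suc_eq_zprime_div by (simp add: int_div_less_of_less_mult pos_imp_zdiv_nonneg_iff)
qed

lemma zprime_nonneg:
  assumes "0 < x"
  shows "0 \<le> zprime m N x xminv j"
  using zseq_bounds[OF assms] ctrl_nonneg[of m N x xminv j] assms by (simp add: zprime_def)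

lemma zprime_less:
  assumes "0 < x" and "x \<le> 2 ^ m"
  shows "zprime m N x xminv j < 2 ^ (2 * m)"
proof -
  have "zprime m N x xminv j < 2 ^ m * x"
    using zseq_bounds[OF assms(1)] ctrl_less add_mult_less_mult by (simp add: zprime_def)
  also have "\<dots> \<le> 2 ^ m * 2 ^ m"
    using assms(2) by simp
  finally show ?thesis
    by (simp add: mult_2 power_add)
qed

lemma ctrl_eq_zprime_div:
  assumes "0 < x"
  shows "ctrl m N x xminv j = zprime m N x xminv j div x"
  using zseq_bounds[OF assms] assms by (simp add: zprime_def)

theorem proposition4p4:
  fixes m n :: nat and N x xminv :: int
  assumes "0 < m" and "0 < n" and "m dvd n"
    and "0 < N" and "N < 2 ^ n"
    and "0 < x" and "odd x" and "x < 2 ^ m"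
    and "[x * xminv = 1] (mod 2 ^ m)" and "0 \<le> xminv" and "xminv < 2 ^ m"
  shows "(\<forall>j. j < n div m \<longrightarrow> 0 \<le> zseq m N x xminv j \<and> zseq m N x xminv j < x)
       \<and> (\<forall>j. j + 2 \<le> n div m \<longrightarrow> 0 \<le> zprime m N x xminv j \<and> zprime m N x xminv j < 2 ^ (2 * m))
       \<and> (\<forall>j. j + 2 \<le> n div m \<longrightarrow> ctrl m N x xminv j = zprime m N x xminv j div x)"
  using zseq_bounds[OF \<open>0 < x\<close>] zprime_nonneg[OF \<open>0 < x\<close>]
    zprime_less[OF \<open>0 < x\<close> less_imp_le[OF \<open>x < 2 ^ m\<close>]] ctrl_eq_zprime_div[OF \<open>0 < x\<close>]
  by blast

end
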